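(* Let $C=(1,c_2,\dots,c_n)$ be a canonical system. Then for each $1\le i\le n$, the subsystem $(1,c_2,\dots,c_i)$ is tight.
   Context: A system is a tuple $C=(c_1,\dots,c_n)$ of integers with $1=c_1<c_2<\dots<c_n$; for $k\le n$, $(c_1,\dots,c_k)$ is a subsystem. For a positive integer $v$, $\mathrm{opt}_C(v)$ is the minimum of $\sum_i x_i$ over $x\in\mathbb{Z}_{\ge0}^n$ with $\sum_i c_ix_i=v$. The greedy representation of $v$ is produced by: for $i=n$ down to $1$, while $c_i\le$ remaining value, take a coin $c_i$. $\mathrm{grd}_C(v)$ is its number of coins. A positive integer $w$ is a counterexample if $\mathrm{opt}_C(w)<\mathrm{grd}_C(w)$; $C$ is canonical if it has none, noncanonical otherwise. A system $(c_1,\dots,c_k)$ is tight if it has no counterexample smaller than $c_k$. *)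

theory Defs
  imports Main
begin

text \<open>A coin system is a nonempty strictly increasing list of positive integers
starting with 1; element cs!(i-1) is the coin c_i.\<close>

definition coin_system :: "nat list \<Rightarrow> bool" where
  "coin_system cs \<longleftrightarrow> cs \<noteq> [] \<and> hd cs = 1 \<and> sorted_wrt (<) cs"

definition opt :: "nat list \<Rightarrow> nat \<Rightarrow> nat" where
  "opt cs v = (LEAST k. \<exists>x :: nat \<Rightarrow> nat.
      (\<Sum>i<length cs. cs ! i * x i) = v \<and> (\<Sum>i<length cs. x i) = k)"

text \<open>Greedy algorithm, coins processed from largest to smallest: for coin c,
taking c while c <= remaining value takes exactly (remaining div c) coins.\<close>
fun grd_aux :: "nat list \<Rightarrow> nat \<Rightarrow> nat" where
  "grd_aux [] v = 0"
| "grd_aux (c # cs) v = v div c + grd_aux cs (v mod c)"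

definition grd :: "nat list \<Rightarrow> nat \<Rightarrow> nat" where
  "grd cs v = grd_aux (rev cs) v"

definition counterexample :: "nat list \<Rightarrow> nat \<Rightarrow> bool" where
  "counterexample cs w \<longleftrightarrow> 0 < w \<and> opt cs w < grd cs w"

definition canonical :: "nat list \<Rightarrow> bool" where
  "canonical cs \<longleftrightarrow> (\<forall>w. \<not> counterexample cs w)"

definition tight :: "nat list \<Rightarrow> bool" where
  "tight cs \<longleftrightarrow> (\<forall>w. w < last cs \<longrightarrow> \<not> counterexample cs w)"

end

theory Submission
  imports Defs
begin

text \<open>Below the coin c_i, the greedy algorithm for C skips all coins larger than c_i and so
behaves exactly as for the subsystem (c_1, ..., c_i), while any representation in the subsystem
is also one in C, so opt can only decrease. Hence a counterexample w < c_i of the subsystem is a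
counterexample of C.\<close>

lemma grd_aux_append_skip:
  assumes "\<forall>c\<in>set xs. v < c"
  shows "grd_aux (xs @ ys) v = grd_aux ys v"
  using assms by (induction xs) auto

lemma last_take_less_drop:
  assumes "sorted_wrt (<) cs" and "0 < i" and "i \<le> length cs" and "c \<in> set (drop i cs)"
  shows "last (take i cs) < c"
proof -
  have "last (take i cs) \<in> set (take i cs)"
    using assms(2,3) by (intro last_in_set) auto
  moreover have "sorted_wrt (<) (take i cs @ drop i cs)"
    using assms(1) by simp
  ultimately show ?thesis
    using assms(4) unfolding sorted_wrt_append by blast
qed

lemma grd_take:
  assumes "\<forall>c\<in>set (drop i cs). v < c"
  shows "grd cs v = grd (take i cs) v"
proof -
  have "rev cs = rev (drop i cs) @ rev (take i cs)"
    by (metis append_take_drop_id rev_append)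
  then show ?thesis
    unfolding grd_def using grd_aux_append_skip[of "rev (drop i cs)"] assms by simp
qed

lemma opt_attained:
  assumes "cs \<noteq> []" and "hd cs = 1"
  shows "\<exists>x. (\<Sum>j<length cs. cs ! j * x j) = v \<and> (\<Sum>j<length cs. x j) = opt cs v"
proof -
  let ?x = "\<lambda>j. if j = 0 then v else 0"
  have "cs ! 0 = 1" and "0 < length cs"
    using assms by (auto simp: hd_conv_nth)
  then have "(\<Sum>j<length cs. cs ! j * ?x j) = v"
    by (subst sum.remove[of _ 0]) auto
  then have "\<exists>k x. (\<Sum>j<length cs. cs ! j * x j) = v \<and> (\<Sum>j<length cs. x j) = k"
    by (intro exI conjI) (assumption | rule refl)+
  then show ?thesis
    unfolding opt_def by (rule LeastI_ex)
qed

lemma opt_le_opt_take: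
  assumes "cs \<noteq> []" and "hd cs = 1" and "0 < i"
  shows "opt cs v \<le> opt (take i cs) v"
proof -
  let ?m = "min (length cs) i"
  have "take i cs \<noteq> []" and "hd (take i cs) = 1"
    using assms by auto
  then obtain x where x: "(\<Sum>j<?m. cs ! j * x j) = v" "(\<Sum>j<?m. x j) = opt (take i cs) v"
    using opt_attained[of "take i cs" v] by auto
  define y where "y j = (if j < ?m then x j else 0)" for j
  have "(\<Sum>j<length cs. cs ! j * y j) = (\<Sum>j<?m. cs ! j * x j)"
    by (rule sum.mono_neutral_cong_right) (auto simp: y_def)
  moreover have "(\<Sum>j<length cs. y j) = (\<Sum>j<?m. x j)"
    by (rule sum.mono_neutral_cong_right) (auto simp: y_def)
  ultimately show ?thesis
    unfolding opt_def[of cs] using x by (intro Least_le) metis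
qed

lemma counterexample_take:
  assumes "coin_system cs" and "0 < i" and "i \<le> length cs"
    and "w < last (take i cs)" and "counterexample (take i cs) w"
  shows "counterexample cs w"
proof -
  have "\<forall>c\<in>set (drop i cs). w < c"
    using assms last_take_less_drop[of cs i] unfolding coin_system_def by force
  then have "grd cs w = grd (take i cs) w"
    by (rule grd_take)
  moreover have "opt cs w \<le> opt (take i cs) w"
    using assms(1,2) unfolding coin_system_def by (intro opt_le_opt_take) auto
  ultimately show ?thesis
    using assms(5) unfolding counterexample_def by auto
qed

theorem lemma1:
  assumes "coin_system cs" and "canonical cs"
  shows "\<forall>i. 1 \<le> i \<and> i \<le> length cs \<longrightarrow> tight (take i cs)"
  using assms(2) counterexample_take[OF assms(1)]
  unfolding canonical_def tight_def by (metis Suc_le_eq One_nat_def)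

end
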